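(* Let $G=(V,E)$ be a finite graph, $\varepsilon$ an orientation, $q$ a positive integer, and let $\rho,\sigma,\omega$ be Eulerian equivalent totally cyclic orientations of $G$. Let $f\in q\Delta^\rho_{\mathrm{FL}}(G,\varepsilon)$. Then: (a) $\varepsilon_f=\rho$; (b) $P_{\varepsilon,\sigma}Q_{\sigma,\rho}P_{\rho,\varepsilon}\big(q\Delta^\rho_{\mathrm{FL}}(G,\varepsilon)\big)=q\Delta^\sigma_{\mathrm{FL}}(G,\varepsilon)$; (c) $P_{\varepsilon,\sigma}Q_{\sigma,\rho}P_{\rho,\varepsilon}f=P_{\varepsilon,\omega}Q_{\omega,\rho}P_{\rho,\varepsilon}f$ if and only if $\sigma=\omega$; (d) $F(G,\varepsilon;q)\cap\mathrm{Mod}_q^{-1}(\mathrm{Mod}_qf)=\{P_{\varepsilon,\alpha}Q_{\alpha,\rho}P_{\rho,\varepsilon}f:\ \alpha\in\mathcal O(G),\ \alpha\sim\rho\}$.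
   Context: An orientation assigns each edge (including loops) one of its two directions; $\varepsilon(v,e)=1$ ($-1$) if non-loop $e$ points out of (into) end-vertex $v$, $0$ otherwise. $F(G,\varepsilon;\mathbb R)$: real flows $f:E\to\mathbb R$ with $\sum_e m_{v,e}f(e)=0$ for all $v$, $m_{v,e}=\varepsilon(v,e)$ for non-loops, $0$ for loops; $F(G,\varepsilon;q)=\{f\in F(G,\varepsilon;\mathbb R):|f(e)|<q\ \forall e\}$. $[\rho,\varepsilon](e)=1$ if $\rho,\varepsilon$ give $e$ the same direction, $-1$ otherwise; $P_{\rho,\varepsilon}:\mathbb R^E\to\mathbb R^E$, $P_{\rho,\varepsilon}f=[\rho,\varepsilon]f$. $Q_{\sigma,\rho}:[0,q]^E\to[0,q]^E$, $(Q_{\sigma,\rho}g)(e)=g(e)$ if $\sigma,\rho$ agree on $e$ and $q-g(e)$ otherwise. $q\Delta^\rho_{\mathrm{FL}}(G,\varepsilon)=\{f\in F(G,\varepsilon;\mathbb R):0<[\rho,\varepsilon](e)f(e)<q\ \forall e\}$. For $f:E\to\mathbb R$, $\varepsilon_f$ agrees with $\varepsilon$ on edges with $f(e)>0$ and is opposite on edges with $f(e)\le0$. $\mathrm{Mod}_q:\mathbb R^E\to(\mathbb R/q\mathbb Z)^E$ reduces each coordinate mod $q$. Orientations are Eulerian equivalent ($\sim$) if the spanning subgraph formed by the edges on which they differ is directed Eulerian (in-degree = out-degree at every vertex) with respect to either of them. A cut $[S,S^c]$ (nonempty set of all edges between a nonempty proper vertex set and its complement) is directed if all its edges point the same way across it;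 totally cyclic means no directed cut. *)

theory Defs
  imports "HOL-Library.FuncSet" Complex_Main
begin

text \<open>A finite graph (loops and multiple edges allowed): vertex set V, edge set E,
  and each edge e has a (formal) ordered pair of ends, ends e = (a, b).
  An orientation is a function r :: 'e \<Rightarrow> bool, extensional on E
  (r e = True: e points from fst (ends e) to snd (ends e); False: the reverse).
  Real functions on E are likewise represented as extensional functions on E.\<close>

definition finite_graph :: "'v set \<Rightarrow> 'e set \<Rightarrow> ('e \<Rightarrow> 'v \<times> 'v) \<Rightarrow> bool" where
  "finite_graph V E ends \<longleftrightarrow> finite V \<and> finite E \<and>
     (\<forall>e\<in>E. fst (ends e) \<in> V \<and> snd (ends e) \<in> V)"

definition orientation :: "'e set \<Rightarrow> ('e \<Rightarrow> bool) \<Rightarrow> bool" where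
  "orientation E r \<longleftrightarrow> r \<in> extensional E"

definition tail :: "('e \<Rightarrow> 'v \<times> 'v) \<Rightarrow> ('e \<Rightarrow> bool) \<Rightarrow> 'e \<Rightarrow> 'v" where
  "tail ends r e = (if r e then fst (ends e) else snd (ends e))"

definition head :: "('e \<Rightarrow> 'v \<times> 'v) \<Rightarrow> ('e \<Rightarrow> bool) \<Rightarrow> 'e \<Rightarrow> 'v" where
  "head ends r e = (if r e then snd (ends e) else fst (ends e))"

definition is_loop :: "('e \<Rightarrow> 'v \<times> 'v) \<Rightarrow> 'e \<Rightarrow> bool" where
  "is_loop ends e \<longleftrightarrow> fst (ends e) = snd (ends e)"

definition incid :: "('e \<Rightarrow> 'v \<times> 'v) \<Rightarrow> ('e \<Rightarrow> bool) \<Rightarrow> 'v \<Rightarrow> 'e \<Rightarrow> real" where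
  "incid ends eps v e =
     (if is_loop ends e then 0
      else if v = tail ends eps e then 1
      else if v = head ends eps e then -1 else 0)"

definition flows :: "'v set \<Rightarrow> 'e set \<Rightarrow> ('e \<Rightarrow> 'v \<times> 'v) \<Rightarrow> ('e \<Rightarrow> bool) \<Rightarrow> ('e \<Rightarrow> real) set" where
  "flows V E ends eps = {f. f \<in> extensional E \<and>
      (\<forall>v\<in>V. (\<Sum>e\<in>E. incid ends eps v e * f e) = 0)}"

definition qflows :: "'v set \<Rightarrow> 'e set \<Rightarrow> ('e \<Rightarrow> 'v \<times> 'v) \<Rightarrow> ('e \<Rightarrow> bool) \<Rightarrow> real \<Rightarrow> ('e \<Rightarrow> real) set" where
  "qflows V E ends eps q = {f \<in> flows V E ends eps. \<forall>e\<in>E. \<bar>f e\<bar> < q}"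

definition sgn_or :: "('e \<Rightarrow> bool) \<Rightarrow> ('e \<Rightarrow> bool) \<Rightarrow> 'e \<Rightarrow> real" where
  "sgn_or \<rho> eps e = (if \<rho> e = eps e then 1 else -1)"

definition Pmap :: "'e set \<Rightarrow> ('e \<Rightarrow> bool) \<Rightarrow> ('e \<Rightarrow> bool) \<Rightarrow> ('e \<Rightarrow> real) \<Rightarrow> ('e \<Rightarrow> real)" where
  "Pmap E \<rho> eps f = restrict (\<lambda>e. sgn_or \<rho> eps e * f e) E"

definition Qmap :: "'e set \<Rightarrow> real \<Rightarrow> ('e \<Rightarrow> bool) \<Rightarrow> ('e \<Rightarrow> bool) \<Rightarrow> ('e \<Rightarrow> real) \<Rightarrow> ('e \<Rightarrow> real)" where
  "Qmap E q \<sigma> \<rho> g = restrict (\<lambda>e. if \<sigma> e = \<rho> e then g e else q - g e) E"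

definition qDeltaFL :: "'v set \<Rightarrow> 'e set \<Rightarrow> ('e \<Rightarrow> 'v \<times> 'v) \<Rightarrow> ('e \<Rightarrow> bool) \<Rightarrow> real \<Rightarrow> ('e \<Rightarrow> bool) \<Rightarrow> ('e \<Rightarrow> real) set" where
  "qDeltaFL V E ends eps q \<rho> = {f \<in> flows V E ends eps.
      \<forall>e\<in>E. 0 < sgn_or \<rho> eps e * f e \<and> sgn_or \<rho> eps e * f e < q}"

definition orient_of :: "'e set \<Rightarrow> ('e \<Rightarrow> bool) \<Rightarrow> ('e \<Rightarrow> real) \<Rightarrow> ('e \<Rightarrow> bool)" where
  "orient_of E eps f = restrict (\<lambda>e. if f e > 0 then eps e else \<not> eps e) E"

text \<open>Mod_q: coordinatewise reduction into [0,q), representing R/qZ.\<close>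
definition Mod_q :: "'e set \<Rightarrow> real \<Rightarrow> ('e \<Rightarrow> real) \<Rightarrow> ('e \<Rightarrow> real)" where
  "Mod_q E q f = restrict (\<lambda>e. f e - q * of_int \<lfloor>f e / q\<rfloor>) E"

text \<open>Eulerian equivalence: the spanning subgraph of edges where they differ is
  directed Eulerian (in-degree = out-degree at each vertex) w.r.t. \<rho>.\<close>
definition eulerian_equiv :: "'v set \<Rightarrow> 'e set \<Rightarrow> ('e \<Rightarrow> 'v \<times> 'v) \<Rightarrow> ('e \<Rightarrow> bool) \<Rightarrow> ('e \<Rightarrow> bool) \<Rightarrow> bool" where
  "eulerian_equiv V E ends \<rho> \<sigma> \<longleftrightarrow>
     (\<forall>v\<in>V. card {e\<in>E. \<rho> e \<noteq> \<sigma> e \<and> head ends \<rho> e = v} =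
             card {e\<in>E. \<rho> e \<noteq> \<sigma> e \<and> tail ends \<rho> e = v})"

definition cut_edges :: "'v set \<Rightarrow> 'e set \<Rightarrow> ('e \<Rightarrow> 'v \<times> 'v) \<Rightarrow> 'v set \<Rightarrow> 'e set" where
  "cut_edges V E ends S = {e\<in>E. (fst (ends e) \<in> S \<and> snd (ends e) \<in> V - S) \<or>
                                 (snd (ends e) \<in> S \<and> fst (ends e) \<in> V - S)}"

definition totally_cyclic :: "'v set \<Rightarrow> 'e set \<Rightarrow> ('e \<Rightarrow> 'v \<times> 'v) \<Rightarrow> ('e \<Rightarrow> bool) \<Rightarrow> bool" where
  "totally_cyclic V E ends \<rho> \<longleftrightarrow>
     (\<forall>S. S \<subseteq> V \<and> S \<noteq> {} \<and> S \<noteq> V \<and> cut_edges V E ends S \<noteq> {} \<longrightarrow>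
        \<not> (\<forall>e\<in>cut_edges V E ends S. tail ends \<rho> e \<in> S) \<and>
        \<not> (\<forall>e\<in>cut_edges V E ends S. head ends \<rho> e \<in> S))"

definition PQP :: "'e set \<Rightarrow> real \<Rightarrow> ('e \<Rightarrow> bool) \<Rightarrow> ('e \<Rightarrow> bool) \<Rightarrow> ('e \<Rightarrow> bool) \<Rightarrow> ('e \<Rightarrow> real) \<Rightarrow> ('e \<Rightarrow> real)" where
  "PQP E q eps \<alpha> \<rho> f = Pmap E eps \<alpha> (Qmap E q \<alpha> \<rho> (Pmap E \<rho> eps f))"

end

theory Submission
  imports Defs
begin

text \<open>Writing \<open>PQP E q eps \<alpha> \<rho> f = f + q \<chi>\<close>, where \<open>\<chi>\<close> is the incidence vector (in \<open>eps\<close>-coordinates)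
  of the subgraph on which \<open>\<alpha>\<close> and \<open>\<rho>\<close> differ, oriented by \<open>\<alpha>\<close>, everything reduces to
  edgewise arithmetic: the net outflow of \<open>\<chi>\<close> at a vertex is out-degree minus in-degree of
  that subgraph, so \<open>f + q \<chi>\<close> is a flow iff \<open>\<alpha> \<sim> \<rho>\<close>; reversing an edge maps the open
  interval \<open>(0, q)\<close> of \<open>\<rho>\<close>-signed values onto that of \<open>\<alpha>\<close>-signed values; and a flow with all
  values in \<open>(-q, q)\<close> that is congruent to \<open>f\<close> modulo \<open>q\<close> differs from \<open>f\<close> on each edge by
  \<open>0\<close> or by \<open>q\<close> in the direction opposite to \<open>\<rho>\<close>, which recovers \<open>\<alpha>\<close>.\<close>

definition reversal_vector :: "('e \<Rightarrow> bool) \<Rightarrow> ('e \<Rightarrow> bool) \<Rightarrow> ('e \<Rightarrow> bool) \<Rightarrow> 'e \<Rightarrow> real" where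
  "reversal_vector eps \<alpha> \<rho> e = (if \<alpha> e = \<rho> e then 0 else sgn_or \<alpha> eps e)"

lemma sgn_or_cases: "sgn_or \<alpha> eps e = 1 \<or> sgn_or \<alpha> eps e = -1"
  by (simp add: sgn_or_def)

lemma reversal_vector_in_Ints: "reversal_vector eps \<alpha> \<rho> e \<in> \<int>"
  by (simp add: reversal_vector_def sgn_or_def)

lemma PQP_eq_add_reversal_vector:
  "PQP E q eps \<alpha> \<rho> f = restrict (\<lambda>e. f e + q * reversal_vector eps \<alpha> \<rho> e) E"
  unfolding PQP_def Pmap_def Qmap_def reversal_vector_def sgn_or_def
  by (rule ext) (auto simp: algebra_simps)

lemma incid_mult_sgn_or: "incid ends eps v e * sgn_or \<alpha> eps e = incid ends \<alpha> v e"
  unfolding incid_def sgn_or_def tail_def head_def is_loop_def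
  by (cases "\<alpha> e"; cases "eps e") auto

lemma incid_eq_tail_minus_head:
  "incid ends \<alpha> v e = of_bool (tail ends \<alpha> e = v) - of_bool (head ends \<alpha> e = v)"
  unfolding incid_def tail_def head_def is_loop_def
  by (cases "\<alpha> e") auto

lemma net_outflow_reversal_vector:
  assumes "finite E"
  shows "(\<Sum>e\<in>E. incid ends eps v e * reversal_vector eps \<alpha> \<rho> e) =
    real (card {e\<in>E. \<alpha> e \<noteq> \<rho> e \<and> tail ends \<alpha> e = v})
    - real (card {e\<in>E. \<alpha> e \<noteq> \<rho> e \<and> head ends \<alpha> e = v})"
proof -
  let ?D = "{e\<in>E. \<alpha> e \<noteq> \<rho> e}"
  have "(\<Sum>e\<in>E. incid ends eps v e * reversal_vector eps \<alpha> \<rho> e)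
      = (\<Sum>e\<in>?D. incid ends eps v e * reversal_vector eps \<alpha> \<rho> e)"
    using assms by (intro sum.mono_neutral_right) (auto simp: reversal_vector_def)
  also have "\<dots> = (\<Sum>e\<in>?D. of_bool (tail ends \<alpha> e = v) - of_bool (head ends \<alpha> e = v))"
    by (intro sum.cong refl)
       (simp add: reversal_vector_def incid_mult_sgn_or flip: incid_eq_tail_minus_head)
  also have "\<dots> = real (card (?D \<inter> {e. tail ends \<alpha> e = v})) - real (card (?D \<inter> {e. head ends \<alpha> e = v}))"
    using assms by (simp add: sum_subtractf)
  also have "?D \<inter> {e. tail ends \<alpha> e = v} = {e\<in>E. \<alpha> e \<noteq> \<rho> e \<and> tail ends \<alpha> e = v}" by auto
  also have "?D \<inter> {e. head ends \<alpha> e = v} = {e\<in>E. \<alpha> e \<noteq> \<rho> e \<and> head ends \<alpha> e = v}" by auto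
  finally show ?thesis .
qed

lemma eulerian_equiv_sym:
  assumes "eulerian_equiv V E ends \<rho> \<sigma>"
  shows "eulerian_equiv V E ends \<sigma> \<rho>"
proof -
  have "{e\<in>E. \<sigma> e \<noteq> \<rho> e \<and> head ends \<sigma> e = v} = {e\<in>E. \<rho> e \<noteq> \<sigma> e \<and> tail ends \<rho> e = v}"
       "{e\<in>E. \<sigma> e \<noteq> \<rho> e \<and> tail ends \<sigma> e = v} = {e\<in>E. \<rho> e \<noteq> \<sigma> e \<and> head ends \<rho> e = v}" for v
    by (auto simp: head_def tail_def split: if_splits)
  then show ?thesis using assms unfolding eulerian_equiv_def by simp
qed

lemma eulerian_equiv_iff_reversal_vector_conserved:
  assumes "finite E"
  shows "eulerian_equiv V E ends \<alpha> \<rho> \<longleftrightarrow>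
    (\<forall>v\<in>V. (\<Sum>e\<in>E. incid ends eps v e * reversal_vector eps \<alpha> \<rho> e) = 0)"
  unfolding eulerian_equiv_def net_outflow_reversal_vector[OF assms] by auto

lemma net_outflow_PQP:
  "(\<Sum>e\<in>E. incid ends eps v e * PQP E q eps \<alpha> \<rho> f e) =
    (\<Sum>e\<in>E. incid ends eps v e * f e) + q * (\<Sum>e\<in>E. incid ends eps v e * reversal_vector eps \<alpha> \<rho> e)"
proof -
  have "(\<Sum>e\<in>E. incid ends eps v e * PQP E q eps \<alpha> \<rho> f e)
      = (\<Sum>e\<in>E. incid ends eps v e * f e + q * (incid ends eps v e * reversal_vector eps \<alpha> \<rho> e))"
    by (intro sum.cong refl) (simp add: PQP_eq_add_reversal_vector algebra_simps)
  then show ?thesis by (simp add: sum.distrib sum_distrib_left)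
qed

lemma PQP_in_flows_iff:
  assumes "finite E" "f \<in> flows V E ends eps" "q \<noteq> 0"
  shows "PQP E q eps \<alpha> \<rho> f \<in> flows V E ends eps \<longleftrightarrow> eulerian_equiv V E ends \<alpha> \<rho>"
proof -
  have "PQP E q eps \<alpha> \<rho> f \<in> extensional E"
    by (simp add: PQP_eq_add_reversal_vector)
  with assms show ?thesis
    by (simp add: flows_def net_outflow_PQP
                    eulerian_equiv_iff_reversal_vector_conserved[where eps = eps])
qed

lemma PQP_PQP_inverse:
  assumes "k \<in> extensional E"
  shows "PQP E q eps \<sigma> \<rho> (PQP E q eps \<rho> \<sigma> k) = k"
proof
  fix e show "PQP E q eps \<sigma> \<rho> (PQP E q eps \<rho> \<sigma> k) e = k e"
    using assms
    by (cases "e \<in> E")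
       (auto simp: PQP_eq_add_reversal_vector reversal_vector_def sgn_or_def extensional_def)
qed

lemma PQP_in_qDeltaFL:
  assumes "finite E" "q > 0" "h \<in> qDeltaFL V E ends eps q \<gamma>" "eulerian_equiv V E ends \<beta> \<gamma>"
  shows "PQP E q eps \<beta> \<gamma> h \<in> qDeltaFL V E ends eps q \<beta>"
proof -
  have h: "h \<in> flows V E ends eps"
    and box: "\<And>e. e \<in> E \<Longrightarrow> 0 < sgn_or \<gamma> eps e * h e \<and> sgn_or \<gamma> eps e * h e < q"
    using assms(3) by (auto simp: qDeltaFL_def)
  have "0 < sgn_or \<beta> eps e * PQP E q eps \<beta> \<gamma> h e \<and> sgn_or \<beta> eps e * PQP E q eps \<beta> \<gamma> h e < q"
    if "e \<in> E" for e
    using box[OF that] that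
    by (auto simp: PQP_eq_add_reversal_vector reversal_vector_def sgn_or_def algebra_simps)
  with PQP_in_flows_iff[OF assms(1) h] assms(2,4) show ?thesis
    by (simp add: qDeltaFL_def)
qed

lemma PQP_image_qDeltaFL:
  assumes "finite E" "q > 0" "eulerian_equiv V E ends \<rho> \<sigma>"
  shows "PQP E q eps \<sigma> \<rho> ` qDeltaFL V E ends eps q \<rho> = qDeltaFL V E ends eps q \<sigma>"
proof
  show "PQP E q eps \<sigma> \<rho> ` qDeltaFL V E ends eps q \<rho> \<subseteq> qDeltaFL V E ends eps q \<sigma>"
    using PQP_in_qDeltaFL[OF assms(1,2) _ eulerian_equiv_sym[OF assms(3)]] by blast
next
  show "qDeltaFL V E ends eps q \<sigma> \<subseteq> PQP E q eps \<sigma> \<rho> ` qDeltaFL V E ends eps q \<rho>"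
  proof
    fix k assume k: "k \<in> qDeltaFL V E ends eps q \<sigma>"
    then have "k = PQP E q eps \<sigma> \<rho> (PQP E q eps \<rho> \<sigma> k)"
      by (simp add: PQP_PQP_inverse qDeltaFL_def flows_def)
    with PQP_in_qDeltaFL[OF assms(1,2) k assms(3)] show "k \<in> PQP E q eps \<sigma> \<rho> ` qDeltaFL V E ends eps q \<rho>"
      by blast
  qed
qed

lemma orient_of_qDeltaFL:
  assumes "orientation E \<rho>" "f \<in> qDeltaFL V E ends eps q \<rho>"
  shows "orient_of E eps f = \<rho>"
proof
  fix e show "orient_of E eps f e = \<rho> e"
    using assms
    by (cases "e \<in> E") (auto simp: orient_of_def orientation_def qDeltaFL_def sgn_or_def
                                   extensional_def split: if_splits)
qed

lemma PQP_eq_iff: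
  assumes "q \<noteq> 0" "orientation E \<sigma>" "orientation E \<omega>"
  shows "PQP E q eps \<sigma> \<rho> f = PQP E q eps \<omega> \<rho> f \<longleftrightarrow> \<sigma> = \<omega>"
proof
  assume same: "PQP E q eps \<sigma> \<rho> f = PQP E q eps \<omega> \<rho> f"
  show "\<sigma> = \<omega>"
  proof
    fix e show "\<sigma> e = \<omega> e"
    proof (cases "e \<in> E")
      case True
      with fun_cong[OF same, of e] assms(1)
      have "reversal_vector eps \<sigma> \<rho> e = reversal_vector eps \<omega> \<rho> e"
        by (simp add: PQP_eq_add_reversal_vector)
      then show ?thesis by (auto simp: reversal_vector_def sgn_or_def split: if_splits)
    next
      case False
      with assms(2,3) show ?thesis by (simp add: orientation_def extensional_def)
    qed
  qed
qed simp

lemma Mod_q_eq_iff: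
  assumes "q > 0"
  shows "Mod_q E q g = Mod_q E q f \<longleftrightarrow> (\<forall>e\<in>E. (g e - f e) / q \<in> \<int>)"
proof -
  have "g e - q * of_int \<lfloor>g e / q\<rfloor> = f e - q * of_int \<lfloor>f e / q\<rfloor> \<longleftrightarrow> (g e - f e) / q \<in> \<int>" for e
  proof
    assume "g e - q * of_int \<lfloor>g e / q\<rfloor> = f e - q * of_int \<lfloor>f e / q\<rfloor>"
    then have "(g e - f e) / q = of_int (\<lfloor>g e / q\<rfloor> - \<lfloor>f e / q\<rfloor>)"
      using assms by (simp add: field_simps)
    then show "(g e - f e) / q \<in> \<int>" by simp
  next
    assume "(g e - f e) / q \<in> \<int>"
    then obtain k where "(g e - f e) / q = of_int k" by (auto elim: Ints_cases)
    then have "g e / q = f e / q + of_int k" and "g e = f e + q * of_int k"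
      using assms by (simp_all add: field_simps)
    then show "g e - q * of_int \<lfloor>g e / q\<rfloor> = f e - q * of_int \<lfloor>f e / q\<rfloor>"
      by (simp add: algebra_simps)
  qed
  then show ?thesis by (auto simp: Mod_q_def restrict_def fun_eq_iff)
qed

lemma Ints_shift_in_box:
  fixes q x k :: real
  assumes "0 < x" "x < q" "\<bar>x + q * k\<bar> < q" "k \<in> \<int>"
  shows "k = 0 \<or> k = -1"
proof -
  have "0 < q" using assms(1,2) by linarith
  moreover have "q * -2 < q * k" "q * k < q * 1" using assms(1-3) by (auto simp only: abs_less_iff)
  ultimately have "-2 < k" "k < 1"
    using mult_less_cancel_left_pos[of q "-2" k] mult_less_cancel_left_pos[of q k 1] by simp_all
  moreover obtain n where "k = of_int n" using assms(4) by (auto elim: Ints_cases)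
  ultimately have "n = 0 \<or> n = -1" by linarith
  with \<open>k = of_int n\<close> show ?thesis by auto
qed

lemma PQP_in_Mod_q_fibre:
  assumes "finite E" "q > 0" "f \<in> qDeltaFL V E ends eps q \<rho>" "eulerian_equiv V E ends \<alpha> \<rho>"
  shows "PQP E q eps \<alpha> \<rho> f \<in> qflows V E ends eps q \<inter> {g. Mod_q E q g = Mod_q E q f}"
proof -
  have f: "f \<in> flows V E ends eps"
    and box: "\<And>e. e \<in> E \<Longrightarrow> 0 < sgn_or \<rho> eps e * f e \<and> sgn_or \<rho> eps e * f e < q"
    using assms(3) by (auto simp: qDeltaFL_def)
  have "\<bar>PQP E q eps \<alpha> \<rho> f e\<bar> < q" if "e \<in> E" for e
    using box[OF that] that
    by (auto simp: PQP_eq_add_reversal_vector reversal_vector_def sgn_or_def)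
  moreover have "Mod_q E q (PQP E q eps \<alpha> \<rho> f) = Mod_q E q f"
    using assms(2) by (simp add: Mod_q_eq_iff PQP_eq_add_reversal_vector reversal_vector_in_Ints)
  ultimately show ?thesis
    using PQP_in_flows_iff[OF assms(1) f] assms(2,4) by (simp add: qflows_def)
qed

lemma Mod_q_fibre_in_PQP_image:
  assumes "finite E" "q > 0" "f \<in> qDeltaFL V E ends eps q \<rho>"
    and g: "g \<in> qflows V E ends eps q" "Mod_q E q g = Mod_q E q f"
  obtains \<alpha> where "orientation E \<alpha>" "eulerian_equiv V E ends \<alpha> \<rho>" "g = PQP E q eps \<alpha> \<rho> f"
proof
  define \<alpha> where "\<alpha> = restrict (\<lambda>e. if g e = f e then \<rho> e else \<not> \<rho> e) E"
  show "orientation E \<alpha>" by (simp add: orientation_def \<alpha>_def)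
  have f: "f \<in> flows V E ends eps"
    and box: "\<And>e. e \<in> E \<Longrightarrow> 0 < sgn_or \<rho> eps e * f e \<and> sgn_or \<rho> eps e * f e < q"
    using assms(3) by (auto simp: qDeltaFL_def)
  have "g e = f e + q * reversal_vector eps \<alpha> \<rho> e" if e: "e \<in> E" for e
  proof -
    define s where "s = sgn_or \<rho> eps e"
    define k where "k = (g e - f e) / q"
    have s: "s = 1 \<or> s = -1" by (simp add: s_def sgn_or_cases)
    have "k \<in> \<int>" using g(2) e assms(2) by (simp add: k_def Mod_q_eq_iff)
    then have "s * k \<in> \<int>" using s by auto
    moreover have "\<bar>s * f e + q * (s * k)\<bar> < q"
      using g(1) e s assms(2) by (auto simp: qflows_def k_def field_simps)
    moreover have "0 < s * f e" "s * f e < q" using box[OF e] by (simp_all add: s_def)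
    ultimately have "s * k = 0 \<or> s * k = -1" using Ints_shift_in_box by blast
    then show ?thesis
    proof
      assume "s * k = 0"
      then have "g e = f e" using s assms(2) by (auto simp: k_def)
      with e show ?thesis by (simp add: reversal_vector_def \<alpha>_def)
    next
      assume "s * k = -1"
      then have "g e = f e - q * s" using s assms(2) by (auto simp: k_def field_simps)
      moreover have "g e \<noteq> f e" using \<open>s * k = -1\<close> by (auto simp: k_def)
      ultimately show ?thesis using e by (simp add: reversal_vector_def \<alpha>_def s_def sgn_or_def)
    qed
  qed
  moreover have "g \<in> extensional E" using g(1) by (simp add: qflows_def flows_def)
  ultimately show g_eq: "g = PQP E q eps \<alpha> \<rho> f"
    by (auto simp: PQP_eq_add_reversal_vector fun_eq_iff extensional_def)
  show "eulerian_equiv V E ends \<alpha> \<rho>"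
    using PQP_in_flows_iff[OF assms(1) f] g(1) assms(2) g_eq by (simp add: qflows_def)
qed

lemma qflows_Mod_q_fibre:
  assumes "finite E" "q > 0" "f \<in> qDeltaFL V E ends eps q \<rho>"
  shows "qflows V E ends eps q \<inter> {g. Mod_q E q g = Mod_q E q f} =
    {PQP E q eps \<alpha> \<rho> f | \<alpha>. orientation E \<alpha> \<and> eulerian_equiv V E ends \<alpha> \<rho>}"
  using PQP_in_Mod_q_fibre[OF assms] Mod_q_fibre_in_PQP_image[OF assms] by blast

theorem lemma5p4:
  fixes V :: "'v set" and E :: "'e set" and ends :: "'e \<Rightarrow> 'v \<times> 'v"
    and eps \<rho> \<sigma> \<omega> :: "'e \<Rightarrow> bool" and q :: nat and f :: "'e \<Rightarrow> real"
  assumes G: "finite_graph V E ends"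
    and eps: "orientation E eps"
    and q: "q > 0"
    and or: "orientation E \<rho>" "orientation E \<sigma>" "orientation E \<omega>"
    and eq: "eulerian_equiv V E ends \<rho> \<sigma>" "eulerian_equiv V E ends \<rho> \<omega>"
            "eulerian_equiv V E ends \<sigma> \<omega>"
    and tc: "totally_cyclic V E ends \<rho>" "totally_cyclic V E ends \<sigma>"
            "totally_cyclic V E ends \<omega>"
    and f: "f \<in> qDeltaFL V E ends eps (real q) \<rho>"
  shows "orient_of E eps f = \<rho> \<and>
         PQP E (real q) eps \<sigma> \<rho> ` qDeltaFL V E ends eps (real q) \<rho>
           = qDeltaFL V E ends eps (real q) \<sigma> \<and>
         (PQP E (real q) eps \<sigma> \<rho> f = PQP E (real q) eps \<omega> \<rho> f \<longleftrightarrow> \<sigma> = \<omega>) \<and>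
         qflows V E ends eps (real q) \<inter> {g. Mod_q E (real q) g = Mod_q E (real q) f}
           = {PQP E (real q) eps \<alpha> \<rho> f | \<alpha>. orientation E \<alpha> \<and> eulerian_equiv V E ends \<alpha> \<rho>}"
proof -
  have "finite E" using G by (simp add: finite_graph_def)
  moreover have "real q > 0" using q by simp
  ultimately show ?thesis
    using orient_of_qDeltaFL[OF or(1) f] PQP_image_qDeltaFL[OF _ _ eq(1)]
      PQP_eq_iff[OF _ or(2,3)] qflows_Mod_q_fibre[OF _ _ f]
    by simp
qed

end
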